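(* Let $h:\{x_1,\dots,x_n\}^*\to\{a_1,\dots,a_k\}^*$ be a solution of rank $n-1$ of both equations $E$ and $E'$, and let $\lambda\in\mathbb Z^n$ have coprime coefficients with $\Gamma_h=\{\mathbf u\in\mathbb Q^n:\lambda\cdot\mathbf u=0\}$. Then for all $j,k\in\{1,\dots,n\}$ the polynomial $t_{jk}^{E,E'}$ is divisible by $\mathbf X^{\lambda^+}-\mathbf X^{\lambda^-}$. In particular, $\mathcal S_E(\beta)$ and $\mathcal S_{E'}(\beta)$ are linearly dependent over $\mathbb Q(x)$ for every $\beta\in\Gamma_h\cap\mathbb N_0^n$.
   Context: An equation is a pair $E=(u,v)$ of words over $\Xi=\{x_1,\dots,x_n\}$; a solution is a morphism $h$ with $h(u)=h(v)$. For $h:\Xi^*\to\{a_1,\dots,a_k\}^*$, $\gamma(h)_i=(|h(x_1)|_{a_i},\dots,|h(x_n)|_{a_i})$, $\Gamma_h$ is the $\mathbb Q$-span of the $\gamma(h)_i$, and the rank of $h$ is $\dim\Gamma_h$. For $E=(x_{i_1}\cdots x_{i_r},\,x_{j_1}\cdots x_{j_s})$ define $S_{E,x_j}=\sum_{a:\,i_a=j}\prod_{t=1}^{a-1}X_{i_t}-\sum_{a:\,j_a=j}\prod_{t=1}^{a-1}X_{j_t}\in\mathbb Z[X_1,\dots,X_n]$ (empty product $=1$), and $t_{jk}^{E,E'}=S_{E,x_j}S_{E',x_k}-S_{E',x_j}S_{E,x_k}$. For $\beta\in\mathbb N_0^n$, $p(\beta)\in\mathbb Z[x]$ is the image of $p$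 under $X_i\mapsto x^{(\beta)_i}$, and $\mathcal S_E(\beta)=(S_{E,x_1}(\beta),\dots,S_{E,x_n}(\beta))\in\mathbb Z[x]^n$. For $\alpha\in\mathbb N_0^n$, $\mathbf X^\alpha=\prod X_i^{(\alpha)_i}$; for $\lambda\in\mathbb Z^n$, $\lambda^\pm\in\mathbb N_0^n$ are the unique vectors with $\lambda=\lambda^+-\lambda^-$, $\lambda^+\cdot\lambda^-=0$; coprime coefficients means gcd of coordinates is $1$. *)

theory Defs
  imports "HOL-Library.Poly_Mapping" "HOL-Computational_Algebra.Polynomial"
    "HOL-Computational_Algebra.Fraction_Field"
begin

text \<open>Variables x_1..x_n are the elements of a finite type 'n; words over the
variables are lists.\<close>

type_synonym 'n equation = "'n list \<times> 'n list"

definition hom_ext :: "('n \<Rightarrow> 'a list) \<Rightarrow> 'n list \<Rightarrow> 'a list" where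
  "hom_ext h w = concat (map h w)"

definition is_solution :: "('n \<Rightarrow> 'a list) \<Rightarrow> 'n equation \<Rightarrow> bool" where
  "is_solution h E \<longleftrightarrow> hom_ext h (fst E) = hom_ext h (snd E)"

definition gamma :: "('n \<Rightarrow> 'a list) \<Rightarrow> 'a \<Rightarrow> ('n \<Rightarrow> rat)" where
  "gamma h a = (\<lambda>i. of_nat (count_list (h i) a))"

definition qspan :: "('n \<Rightarrow> rat) set \<Rightarrow> ('n \<Rightarrow> rat) set" where
  "qspan V = {u. \<exists>A c. finite A \<and> A \<subseteq> V \<and> u = (\<lambda>i. \<Sum>v\<in>A. c v * v i)}"

definition Gamma :: "('n \<Rightarrow> 'a list) \<Rightarrow> ('n \<Rightarrow> rat) set" where
  "Gamma h = qspan (range (gamma h))"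

definition qindep :: "('n \<Rightarrow> rat) set \<Rightarrow> bool" where
  "qindep S \<longleftrightarrow> finite S \<and>
     (\<forall>c. (\<forall>i. (\<Sum>v\<in>S. c v * v i) = 0) \<longrightarrow> (\<forall>v\<in>S. c v = 0))"

definition qdim :: "('n::finite \<Rightarrow> rat) set \<Rightarrow> nat" where
  "qdim W = Max {card S | S. S \<subseteq> W \<and> qindep S}"

definition rank :: "('n::finite \<Rightarrow> 'a list) \<Rightarrow> nat" where
  "rank h = qdim (Gamma h)"

text \<open>Multivariate polynomials Z[X_i : i in 'n] as finitely supported maps
from monomials (exponent vectors 'n =>0 nat) to coefficients.\<close>
type_synonym 'n mpoly = "('n \<Rightarrow>\<^sub>0 nat) \<Rightarrow>\<^sub>0 int"

definition Var :: "'n \<Rightarrow> 'n mpoly" where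
  "Var i = Poly_Mapping.single (Poly_Mapping.single i 1) 1"

definition monomial_X :: "('n::finite \<Rightarrow> nat) \<Rightarrow> 'n mpoly" where
  "monomial_X \<alpha> = (\<Prod>i\<in>UNIV. Var i ^ \<alpha> i)"

definition prefix_prod :: "'n list \<Rightarrow> nat \<Rightarrow> 'n mpoly" where
  "prefix_prod w a = prod_list (map Var (take a w))"

definition S_side :: "'n list \<Rightarrow> 'n \<Rightarrow> 'n mpoly" where
  "S_side w j = (\<Sum>a<length w. if w ! a = j then prefix_prod w a else 0)"

definition S_poly :: "'n equation \<Rightarrow> 'n \<Rightarrow> 'n mpoly" where
  "S_poly E j = S_side (fst E) j - S_side (snd E) j"

definition t_poly :: "'n equation \<Rightarrow> 'n equation \<Rightarrow> 'n \<Rightarrow> 'n \<Rightarrow> 'n mpoly" where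
  "t_poly E E' j k = S_poly E j * S_poly E' k - S_poly E' j * S_poly E k"

text \<open>p(beta): substitute X_i := x^(beta_i).\<close>
definition eval_beta :: "('n::finite \<Rightarrow> nat) \<Rightarrow> 'n mpoly \<Rightarrow> int poly" where
  "eval_beta \<beta> p = (\<Sum>m\<in>Poly_Mapping.keys p.
      monom (Poly_Mapping.lookup p m) (\<Sum>i\<in>UNIV. Poly_Mapping.lookup m i * \<beta> i))"

definition S_vec :: "'n::finite equation \<Rightarrow> ('n \<Rightarrow> nat) \<Rightarrow> ('n \<Rightarrow> int poly)" where
  "S_vec E \<beta> = (\<lambda>j. eval_beta \<beta> (S_poly E j))"

definition to_Qx :: "int poly \<Rightarrow> rat poly fract" where
  "to_Qx p = Fract (map_poly of_int p) 1"

definition lin_dep_Qx :: "('n \<Rightarrow> int poly) \<Rightarrow> ('n \<Rightarrow> int poly) \<Rightarrow> bool" where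
  "lin_dep_Qx v w \<longleftrightarrow> (\<exists>c d :: rat poly fract. (c \<noteq> 0 \<or> d \<noteq> 0) \<and>
      (\<forall>j. c * to_Qx (v j) + d * to_Qx (w j) = 0))"

definition pos_part :: "('n \<Rightarrow> int) \<Rightarrow> ('n \<Rightarrow> nat)" where
  "pos_part l = (\<lambda>i. nat (l i))"

definition neg_part :: "('n \<Rightarrow> int) \<Rightarrow> ('n \<Rightarrow> nat)" where
  "neg_part l = (\<lambda>i. nat (- l i))"

end

theory Submission
  imports Defs
begin

(* For a weight w on the letters let beta_w be the exponent vector
   beta_w(i) = total weight of h(x_i).
   (1) eval_beta beta is a ring homomorphism Z[X] -> Z[x].
   (2) For a word u and a letter b let occ_poly w b u be the sum, over the occurrences of b
       in u, of x^(weight of the preceding prefix).  For a solution h of E the vector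
       S_E(beta_w) lies in the kernel of the Z[x]-linear map
       y |-> (sum_j occ_poly w b (h x_j) * y_j)_b.
   (3) This kernel has rank at most one: a kernel vector vanishing at a coordinate l with
       lam l ~= 0 is zero (cancel the common power of x - 1 and evaluate at x = 1: this gives
       an integer vector orthogonal to Gamma_h, hence a multiple of lam).  Therefore all
       minors t_jk(beta_w) vanish.
   (4) A polynomial p with p(beta_w) = 0 for every w is divisible by X^lam+ - X^lam-:
       for a weight w that separates the Parikh vectors of the images of the monomials of p,
       monomials of equal beta_w-degree differ by an integer multiple of lam (Gamma_h = lam^perp,
       lam coprime), and the coefficients of each such class sum to zero.
   (5) For beta in Gamma_h the binomial vanishes at beta, so the minors of
       (S_E(beta), S_E'(beta)) vanish, which gives linear dependence over Q(x). *)

section \<open>Substitution X_i := x^beta_i as a ring homomorphism\<close>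

definition mono_degree :: "('n::finite \<Rightarrow> nat) \<Rightarrow> ('n \<Rightarrow>\<^sub>0 nat) \<Rightarrow> nat" where
  "mono_degree \<beta> m = (\<Sum>i\<in>UNIV. Poly_Mapping.lookup m i * \<beta> i)"

lemma mono_degree_add: "mono_degree \<beta> (a + b) = mono_degree \<beta> a + mono_degree \<beta> b"
  by (simp add: mono_degree_def lookup_add algebra_simps sum.distrib)

lemma eval_beta_superset:
  assumes "finite K" "Poly_Mapping.keys p \<subseteq> K"
  shows "eval_beta \<beta> p = (\<Sum>m\<in>K. monom (Poly_Mapping.lookup p m) (mono_degree \<beta> m))"
  unfolding eval_beta_def mono_degree_def
  by (rule sum.mono_neutral_left) (use assms in \<open>auto simp: in_keys_iff\<close>)

lemma eval_beta_single: "eval_beta \<beta> (Poly_Mapping.single m c) = monom c (mono_degree \<beta> m)"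
  by (subst eval_beta_superset[of "{m}"]) auto

lemma eval_beta_zero [simp]: "eval_beta \<beta> 0 = 0"
  by (simp add: eval_beta_def)

lemma eval_beta_add: "eval_beta \<beta> (p + q) = eval_beta \<beta> p + eval_beta \<beta> q"
proof -
  let ?K = "Poly_Mapping.keys p \<union> Poly_Mapping.keys q"
  have "eval_beta \<beta> (p + q) = (\<Sum>m\<in>?K. monom (Poly_Mapping.lookup (p + q) m) (mono_degree \<beta> m))"
    by (rule eval_beta_superset) (auto simp: keys_add)
  also have "\<dots> = (\<Sum>m\<in>?K. monom (Poly_Mapping.lookup p m) (mono_degree \<beta> m))
                + (\<Sum>m\<in>?K. monom (Poly_Mapping.lookup q m) (mono_degree \<beta> m))"
    by (simp add: lookup_add add_monom[symmetric] sum.distrib)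
  also have "\<dots> = eval_beta \<beta> p + eval_beta \<beta> q"
    by (subst (1 2) eval_beta_superset[where K = ?K]) auto
  finally show ?thesis .
qed

lemma eval_beta_diff: "eval_beta \<beta> (p - q) = eval_beta \<beta> p - eval_beta \<beta> q"
proof -
  have "eval_beta \<beta> (- q) = - eval_beta \<beta> q"
    unfolding eval_beta_def by (simp add: sum_negf[symmetric] minus_monom)
  then show ?thesis using eval_beta_add[of \<beta> p "- q"] by simp
qed

lemma eval_beta_mult: "eval_beta \<beta> (p * q) = eval_beta \<beta> p * eval_beta \<beta> q"
proof -
  have monomial_case: "eval_beta \<beta> (frag_of m * q) = eval_beta \<beta> (frag_of m) * eval_beta \<beta> q" for m
    by (rule frag_induction[of q UNIV])
       (simp_all add: mult_single eval_beta_single mono_degree_add mult_monom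
         right_diff_distrib eval_beta_diff)
  show ?thesis
    by (rule frag_induction[of p UNIV])
       (simp_all add: monomial_case left_diff_distrib eval_beta_diff)
qed

lemma coeff_eval_beta:
  "coeff (eval_beta \<beta> p) e
    = (\<Sum>m\<in>Poly_Mapping.keys p. if mono_degree \<beta> m = e then Poly_Mapping.lookup p m else 0)"
  by (simp add: eval_beta_def mono_degree_def coeff_sum coeff_monom)

lemma eval_beta_one [simp]: "eval_beta \<beta> 1 = 1"
  using eval_beta_single[of \<beta> 0 1] by (simp add: mono_degree_def)

lemma eval_beta_Var: "eval_beta \<beta> (Var i) = monom 1 (\<beta> i)"
  by (simp add: Var_def eval_beta_single mono_degree_def lookup_single when_def
      if_distrib[of "\<lambda>x. x * _"] cong: if_cong)

lemma eval_beta_t_poly: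
  "eval_beta \<beta> (t_poly E E' j k) = S_vec E \<beta> j * S_vec E' \<beta> k - S_vec E' \<beta> j * S_vec E \<beta> k"
  by (simp add: t_poly_def eval_beta_diff eval_beta_mult S_vec_def)

section \<open>Occurrence polynomials and the kernel containing S_E\<close>

definition word_weight :: "('a \<Rightarrow> nat) \<Rightarrow> 'a list \<Rightarrow> nat" where
  "word_weight w u = sum_list (map w u)"

abbreviation weight_vector :: "('a \<Rightarrow> nat) \<Rightarrow> ('n \<Rightarrow> 'a list) \<Rightarrow> 'n \<Rightarrow> nat" where
  "weight_vector w h \<equiv> (\<lambda>i. word_weight w (h i))"

fun occ_poly :: "('a \<Rightarrow> nat) \<Rightarrow> 'a \<Rightarrow> 'a list \<Rightarrow> int poly" where
  "occ_poly w b [] = 0"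
| "occ_poly w b (c # u) = (if c = b then 1 else 0) + monom 1 (w c) * occ_poly w b u"

lemma occ_poly_append:
  "occ_poly w b (u @ v) = occ_poly w b u + monom 1 (word_weight w u) * occ_poly w b v"
  by (induction u) (auto simp: word_weight_def algebra_simps mult_monom)

lemma occ_poly_at_1: "poly (occ_poly w b u) 1 = int (count_list u b)"
  by (induction u) (auto simp: poly_monom)

lemma S_side_Nil: "S_side [] j = 0"
  by (simp add: S_side_def)

lemma S_side_Cons: "S_side (x # U) j = (if x = j then 1 else 0) + Var x * S_side U j"
proof -
  have shift: "(\<Sum>a<length U. if U ! a = j then prefix_prod (x # U) (Suc a) else 0)
      = Var x * S_side U j"
    by (simp add: S_side_def prefix_prod_def sum_distrib_left
        if_distrib[of "\<lambda>t. Var x * t"] cong: if_cong)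
  show ?thesis
    unfolding S_side_def[of "x # U"]
    by (simp only: length_Cons sum.lessThan_Suc_shift nth_Cons_Suc shift)
       (simp add: prefix_prod_def)
qed

lemma S_side_occ_poly:
  fixes h :: "'n::finite \<Rightarrow> 'a list"
  shows "(\<Sum>j\<in>UNIV. eval_beta (weight_vector w h) (S_side U j) * occ_poly w b (h j))
    = occ_poly w b (hom_ext h U)"
proof (induction U)
  case Nil
  then show ?case by (simp add: S_side_Nil hom_ext_def)
next
  case (Cons x U)
  have delta: "(\<Sum>j\<in>UNIV. occ_poly w b (h j) * eval_beta \<beta> (if x = j then 1 else 0))
      = occ_poly w b (h x)" for \<beta>
    by (simp add: if_distrib[of "eval_beta _"] if_distrib[of "\<lambda>t. _ * t"] cong: if_cong)
  have "(\<Sum>j\<in>UNIV. eval_beta (weight_vector w h) (S_side (x # U) j) * occ_poly w b (h j))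
     = occ_poly w b (h x) + monom 1 (word_weight w (h x)) *
        (\<Sum>j\<in>UNIV. eval_beta (weight_vector w h) (S_side U j) * occ_poly w b (h j))"
    by (simp add: S_side_Cons eval_beta_add eval_beta_mult eval_beta_Var algebra_simps
        sum.distrib sum_distrib_left delta)
  also have "\<dots> = occ_poly w b (hom_ext h (x # U))"
    by (simp add: Cons hom_ext_def occ_poly_append)
  finally show ?case .
qed

definition occ_kernel :: "('a \<Rightarrow> nat) \<Rightarrow> ('n::finite \<Rightarrow> 'a list) \<Rightarrow> ('n \<Rightarrow> int poly) \<Rightarrow> bool" where
  "occ_kernel w h y \<longleftrightarrow> (\<forall>b. (\<Sum>j\<in>UNIV. occ_poly w b (h j) * y j) = 0)"

lemma solution_in_occ_kernel:
  assumes "is_solution h E"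
  shows "occ_kernel w h (S_vec E (weight_vector w h))"
  using assms S_side_occ_poly[of w h "fst E"] S_side_occ_poly[of w h "snd E"]
  by (simp add: occ_kernel_def S_vec_def S_poly_def eval_beta_diff algebra_simps
      sum_subtractf is_solution_def)

section \<open>The kernel has rank at most one\<close>

text \<open>A vector orthogonal to all Parikh vectors gamma h a is orthogonal to Gamma h = lam^perp,
  hence proportional to lam.\<close>
lemma orthogonal_to_Gamma_proportional:
  fixes lam :: "'n::finite \<Rightarrow> int" and z :: "'n \<Rightarrow> rat"
  assumes G: "Gamma h = {u. (\<Sum>i\<in>UNIV. of_int (lam i) * u i) = 0}"
    and z: "\<And>a. (\<Sum>i\<in>UNIV. z i * gamma h a i) = 0"
  shows "of_int (lam l) * z m = of_int (lam m) * z l"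
proof -
  define u :: "'n \<Rightarrow> rat"
    where "u = (\<lambda>i. (if i = m then of_int (lam l) else 0) - (if i = l then of_int (lam m) else 0))"
  have pair_u: "(\<Sum>i\<in>UNIV. q i * u i) = q m * of_int (lam l) - q l * of_int (lam m)" for q
    by (simp add: u_def right_diff_distrib sum_subtractf if_distrib[of "\<lambda>t. q _ * t"] cong: if_cong)
  have "u \<in> Gamma h" unfolding G using pair_u[of "\<lambda>i. of_int (lam i)"] by simp
  then obtain A c where A: "A \<subseteq> range (gamma h)" and uA: "u = (\<lambda>i. \<Sum>v\<in>A. c v * v i)"
    unfolding Gamma_def qspan_def by blast
  have "(\<Sum>i\<in>UNIV. z i * u i) = (\<Sum>v\<in>A. c v * (\<Sum>i\<in>UNIV. z i * v i))"
    unfolding uA by (simp add: sum_distrib_left sum_distrib_right mult_ac sum.swap[of _ UNIV A])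
  also have "\<dots> = 0" using A z by (intro sum.neutral) auto
  finally show ?thesis using pair_u[of z] by (simp add: mult_ac)
qed

text \<open>Any family of integer polynomials, not all zero, factors as q * y' with q \<noteq> 0 and
  some y' j not vanishing at 1 (q is the common power of x - 1).\<close>
lemma factor_out_root_one:
  fixes y :: "'n::finite \<Rightarrow> int poly"
  assumes "y j \<noteq> 0"
  obtains q y' j0 where "q \<noteq> 0" "\<And>i. y i = q * y' i" "poly (y' j0) 1 \<noteq> 0"
proof -
  define J where "J = {j. y j \<noteq> 0}"
  have J: "J \<noteq> {}" "finite J" using assms by (auto simp: J_def)
  define e where "e = Min ((\<lambda>j. order 1 (y j)) ` J)"
  have "e \<in> (\<lambda>j. order 1 (y j)) ` J" unfolding e_def using J by (intro Min_in) auto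
  then obtain j0 where j0: "j0 \<in> J" "e = order 1 (y j0)" by auto
  define q :: "int poly" where "q = [:-1, 1:] ^ e"
  have q_dvd: "q dvd y i" for i
  proof (cases "i \<in> J")
    case True
    then have "e \<le> order 1 (y i)" unfolding e_def using J by auto
    then have "q dvd [:-1, 1:] ^ order 1 (y i)" unfolding q_def by (rule le_imp_power_dvd)
    also have "\<dots> dvd y i" using order_1[of 1 "y i"] by simp
    finally show ?thesis .
  qed (simp add: J_def)
  define y' where "y' i = y i div q" for i
  have q: "q \<noteq> 0" by (simp add: q_def)
  have y: "y i = q * y' i" for i using q_dvd[of i] by (simp add: y'_def)
  have "poly (y' j0) 1 \<noteq> 0"
  proof
    assume "poly (y' j0) 1 = 0"
    moreover have "y' j0 \<noteq> 0" using j0(1) y[of j0] by (auto simp: J_def)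
    ultimately have "order 1 (y' j0) \<noteq> 0" by (simp add: order_root)
    moreover have "order 1 (y j0) = e + order 1 (y' j0)"
      using y[of j0] j0(1) by (simp add: J_def order_mult q_def order_power_n_n)
    ultimately show False using j0(2) by simp
  qed
  then show thesis using that q y by blast
qed

lemma occ_kernel_at_one:
  assumes "occ_kernel w h y"
  shows "(\<Sum>i\<in>UNIV. of_int (poly (y i) 1) * gamma h a i) = 0"
proof -
  have "poly (\<Sum>j\<in>UNIV. occ_poly w a (h j) * y j) 1 = 0"
    using assms by (simp add: occ_kernel_def)
  then have "(of_int (\<Sum>j\<in>UNIV. int (count_list (h j) a) * poly (y j) 1) :: rat) = 0"
    by (simp add: poly_sum occ_poly_at_1)
  then show ?thesis by (simp add: gamma_def mult_ac)
qed

lemma occ_kernel_vanishes: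
  fixes lam :: "'n::finite \<Rightarrow> int"
  assumes G: "Gamma h = {u. (\<Sum>i\<in>UNIV. of_int (lam i) * u i) = 0}"
    and l: "lam l \<noteq> 0" and ker: "occ_kernel w h y" and yl: "y l = 0"
  shows "y j = 0"
proof (rule ccontr)
  assume "y j \<noteq> 0"
  then obtain q y' j0 where q: "q \<noteq> 0" and y: "\<And>i. y i = q * y' i"
    and j0: "poly (y' j0) 1 \<noteq> 0"
    using factor_out_root_one[of y j] \<open>y j \<noteq> 0\<close> by blast
  have ker': "occ_kernel w h y'"
  proof -
    have "q * (\<Sum>j\<in>UNIV. occ_poly w b (h j) * y' j) = 0" for b
      using ker by (simp add: occ_kernel_def y sum_distrib_left mult_ac)
    then show ?thesis using q by (simp add: occ_kernel_def)
  qed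
  have "rat_of_int (lam l) * of_int (poly (y' j0) 1) = of_int (lam j0) * of_int (poly (y' l) 1)"
    by (rule orthogonal_to_Gamma_proportional[OF G occ_kernel_at_one[OF ker']])
  moreover have "y' l = 0" using y[of l] yl q by simp
  ultimately show False using l j0 by simp
qed

lemma occ_kernel_minors:
  fixes lam :: "'n::finite \<Rightarrow> int"
  assumes G: "Gamma h = {u. (\<Sum>i\<in>UNIV. of_int (lam i) * u i) = 0}"
    and l: "lam l \<noteq> 0" and s: "occ_kernel w h s" and s': "occ_kernel w h s'"
  shows "s j * s' k = s' j * s k"
proof (cases "s l = 0")
  case True
  then have "s i = 0" for i by (rule occ_kernel_vanishes[OF G l s])
  then show ?thesis by simp
next
  case False
  define y where "y i = s l * s' i - s' l * s i" for i
  have "(\<Sum>j\<in>UNIV. occ_poly w b (h j) * y j) = s l * (\<Sum>j\<in>UNIV. occ_poly w b (h j) * s' j)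
      - s' l * (\<Sum>j\<in>UNIV. occ_poly w b (h j) * s j)" for b
    by (simp add: y_def sum_distrib_left right_diff_distrib sum_subtractf mult_ac)
  then have "occ_kernel w h y"
    using s s' by (simp add: occ_kernel_def)
  moreover have "y l = 0" by (simp add: y_def)
  ultimately have "y i = 0" for i by (rule occ_kernel_vanishes[OF G l])
  then have "s l * (s j * s' k - s' j * s k) = 0"
    using fun_cong[of y "\<lambda>_. 0" j] fun_cong[of y "\<lambda>_. 0" k]
    by (auto simp: y_def algebra_simps fun_eq_iff)
  then show ?thesis using False by simp
qed

section \<open>Monomials and the binomial X^lam+ - X^lam-\<close>

lemma Var_power: "Var i ^ k = Poly_Mapping.single (Poly_Mapping.single i k) 1"
  by (induction k) (simp_all add: Var_def mult_single single_add[symmetric] add.commute)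

lemma monomial_X_single:
  fixes \<alpha> :: "'n::finite \<Rightarrow> nat"
  shows "monomial_X \<alpha> = Poly_Mapping.single (Abs_poly_mapping \<alpha>) 1"
proof -
  have prod_single: "(\<Prod>i\<in>A. Poly_Mapping.single (g i) (1::int)) = Poly_Mapping.single (\<Sum>i\<in>A. g i) 1"
    if "finite A" for A and g :: "'n \<Rightarrow> 'n \<Rightarrow>\<^sub>0 nat"
    using that by (induction A rule: finite_induct) (simp_all add: mult_single)
  have "(\<Sum>i\<in>UNIV. Poly_Mapping.single i (\<alpha> i)) = Abs_poly_mapping \<alpha>"
    by (rule poly_mapping_eqI) (simp add: lookup_sum lookup_single when_def)
  then show ?thesis unfolding monomial_X_def Var_power by (simp add: prod_single)
qed

lemma monomial_X_add: "monomial_X (\<lambda>i. a i + b i) = monomial_X a * monomial_X b"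
  unfolding monomial_X_def by (simp add: power_add prod.distrib)

lemma eval_beta_monomial_X: "eval_beta \<beta> (monomial_X \<alpha>) = monom 1 (\<Sum>i\<in>UNIV. \<alpha> i * \<beta> i)"
  by (simp add: monomial_X_single eval_beta_single mono_degree_def)

text \<open>X^\<alpha> - X^\<alpha>' is divisible by X^lam+ - X^lam- when \<alpha> - \<alpha>' is a nonnegative multiple of lam;
  induction on the multiple, one step being X^(g+lam+) - X^(g+lam-) = X^g (X^lam+ - X^lam-).\<close>
lemma binomial_dvd_nonneg_multiple:
  fixes lam :: "'n::finite \<Rightarrow> int" and \<alpha> \<alpha>' :: "'n \<Rightarrow> nat"
  assumes "\<And>i. int (\<alpha> i) = int (\<alpha>' i) + int k * lam i"
  shows "(monomial_X (pos_part lam) - monomial_X (neg_part lam)) dvd (monomial_X \<alpha> - monomial_X \<alpha>')"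
  using assms
proof (induction k arbitrary: \<alpha>)
  case 0
  then have "\<alpha> = \<alpha>'" by (auto simp: fun_eq_iff)
  then show ?case by simp
next
  case (Suc k)
  define g where "g i = nat (int (\<alpha>' i) + int k * lam i - int (neg_part lam i))" for i
  have g: "int (g i) = int (\<alpha>' i) + int k * lam i - int (neg_part lam i)" for i
    using Suc.prems[of i] mult_nonneg_nonneg[of "int k" "lam i"]
    by (cases "lam i \<ge> 0") (auto simp: g_def neg_part_def algebra_simps)
  have "int (\<alpha> i) = int (g i + pos_part lam i)" for i
    using Suc.prems[of i] g[of i] unfolding pos_part_def neg_part_def
    by (cases "lam i \<ge> 0") (simp_all add: algebra_simps)
  then have "\<alpha> i = g i + pos_part lam i" for i by (simp only: of_nat_eq_iff)
  then have step: "\<alpha> = (\<lambda>i. g i + pos_part lam i)" by (simp add: fun_eq_iff)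
  have "int (g i + neg_part lam i) = int (\<alpha>' i) + int k * lam i" for i
    using g[of i] by simp
  then have IH: "(monomial_X (pos_part lam) - monomial_X (neg_part lam))
       dvd (monomial_X (\<lambda>i. g i + neg_part lam i) - monomial_X \<alpha>')"
    by (rule Suc.IH)
  have "monomial_X \<alpha> - monomial_X \<alpha>' =
      monomial_X g * (monomial_X (pos_part lam) - monomial_X (neg_part lam))
      + (monomial_X (\<lambda>i. g i + neg_part lam i) - monomial_X \<alpha>')"
    unfolding step monomial_X_add by (simp add: algebra_simps)
  then show ?case using dvd_add[OF dvd_triv_right IH] by (simp only:)
qed

lemma binomial_dvd_multiple:
  fixes lam :: "'n::finite \<Rightarrow> int" and \<alpha> \<alpha>' :: "'n \<Rightarrow> nat"
  assumes "\<And>i. int (\<alpha> i) - int (\<alpha>' i) = c * lam i"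
  shows "(monomial_X (pos_part lam) - monomial_X (neg_part lam)) dvd (monomial_X \<alpha> - monomial_X \<alpha>')"
proof (cases "c \<ge> 0")
  case True
  then show ?thesis using assms
    by (intro binomial_dvd_nonneg_multiple[of _ _ "nat c"]) (simp add: algebra_simps)
next
  case False
  have "(monomial_X (pos_part lam) - monomial_X (neg_part lam)) dvd (monomial_X \<alpha>' - monomial_X \<alpha>)"
    using assms False by (intro binomial_dvd_nonneg_multiple[of _ _ "nat (- c)"]) (simp add: algebra_simps)
  then show ?thesis by (subst dvd_minus_iff[symmetric]) simp
qed

lemma eval_beta_binomial_orthogonal:
  fixes lam :: "'n::finite \<Rightarrow> int"
  assumes "(\<Sum>i\<in>UNIV. of_int (lam i) * of_nat (\<beta> i) :: rat) = 0"
  shows "eval_beta \<beta> (monomial_X (pos_part lam) - monomial_X (neg_part lam)) = 0"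
proof -
  have "(of_int (\<Sum>i\<in>UNIV. lam i * int (\<beta> i)) :: rat) = 0" using assms by simp
  then have "(\<Sum>i\<in>UNIV. lam i * int (\<beta> i)) = 0" by (simp only: of_int_eq_0_iff)
  moreover have "int (\<Sum>i\<in>UNIV. pos_part lam i * \<beta> i) - int (\<Sum>i\<in>UNIV. neg_part lam i * \<beta> i)
      = (\<Sum>i\<in>UNIV. lam i * int (\<beta> i))"
    by (simp add: sum_subtractf[symmetric] pos_part_def neg_part_def
        left_diff_distrib[symmetric]) (rule sum.cong; simp; linarith)
  ultimately have "(\<Sum>i\<in>UNIV. pos_part lam i * \<beta> i) = (\<Sum>i\<in>UNIV. neg_part lam i * \<beta> i)"
    by linarith
  then show ?thesis by (simp add: eval_beta_diff eval_beta_monomial_X)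
qed

section \<open>Vanishing at all beta_w forces divisibility by the binomial\<close>

lemma Gcd_one_nonzero:
  fixes lam :: "'n \<Rightarrow> int"
  assumes "Gcd (range lam) = 1"
  shows "\<exists>l. lam l \<noteq> 0"
proof (rule ccontr)
  assume "\<nexists>l. lam l \<noteq> 0"
  then have "range lam = {0}" by auto
  then show False using assms by simp
qed

definition mono_parikh :: "('n::finite \<Rightarrow> 'a list) \<Rightarrow> ('n \<Rightarrow>\<^sub>0 nat) \<Rightarrow> 'a \<Rightarrow> nat" where
  "mono_parikh h m a = (\<Sum>i\<in>UNIV. Poly_Mapping.lookup m i * count_list (h i) a)"

text \<open>Monomials with equal Parikh images differ by an integer multiple of lam: their difference
  is orthogonal to Gamma h = lam^perp, and lam has coprime coefficients.\<close>
lemma equal_parikh_multiple: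
  fixes lam :: "'n::finite \<Rightarrow> int"
  assumes G: "Gamma h = {u. (\<Sum>i\<in>UNIV. of_int (lam i) * u i) = 0}"
    and gcd: "Gcd (range lam) = 1" and l: "lam l \<noteq> 0"
    and eq: "mono_parikh h m = mono_parikh h m'"
  shows "\<exists>c. \<forall>i. int (Poly_Mapping.lookup m i) - int (Poly_Mapping.lookup m' i) = c * lam i"
proof -
  define d where "d i = int (Poly_Mapping.lookup m i) - int (Poly_Mapping.lookup m' i)" for i
  have orth: "(\<Sum>i\<in>UNIV. of_int (d i) * gamma h a i) = 0" for a
  proof -
    have "(of_nat (mono_parikh h m a) :: rat) = of_nat (mono_parikh h m' a)"
      using eq by simp
    then show ?thesis
      by (simp add: mono_parikh_def d_def gamma_def left_diff_distrib sum_subtractf)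
  qed
  have rel: "lam l * d i = lam i * d l" for i
  proof -
    have "(of_int (lam l) * of_int (d i) :: rat) = of_int (lam i) * of_int (d l)"
      by (rule orthogonal_to_Gamma_proportional[OF G orth])
    then show ?thesis by (simp only: of_int_mult[symmetric] of_int_eq_iff)
  qed
  have "lam l dvd Gcd ((*) (d l) ` range lam)"
  proof (rule Gcd_greatest)
    fix x assume "x \<in> (*) (d l) ` range lam"
    then obtain i where "x = d l * lam i" by auto
    then have "x = lam l * d i" using rel[of i] by (simp add: mult.commute)
    then show "lam l dvd x" by simp
  qed
  then obtain c where c: "d l = lam l * c" by (auto simp: Gcd_mult gcd)
  have "d i = c * lam i" for i
    using rel[of i] c l by (simp add: mult_ac)
  then show ?thesis by (auto simp: d_def)
qed

lemma common_nat_nonroot: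
  fixes Q :: "'k \<Rightarrow> int poly"
  assumes "finite D" "\<And>p. p \<in> D \<Longrightarrow> Q p \<noteq> 0"
  shows "\<exists>s::nat. \<forall>p\<in>D. poly (Q p) (int s) \<noteq> 0"
proof -
  define R where "R = (\<Prod>p\<in>D. Q p)"
  have "R \<noteq> 0" using assms by (simp add: R_def)
  then have "finite (int -` {x. poly R x = 0})"
    by (intro finite_vimageI poly_roots_finite) auto
  then obtain s where "s \<notin> int -` {x. poly R x = 0}"
    using ex_new_if_finite[OF infinite_UNIV_nat] by blast
  then show ?thesis using assms(1) by (auto simp: R_def poly_prod)
qed

lemma encoding_poly_nonzero:
  assumes "finite L" "inj_on idx L" "a \<in> L" "f a \<noteq> 0"
  shows "(\<Sum>b\<in>L. monom (f b) (idx b) :: int poly) \<noteq> 0"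
proof -
  have "coeff (\<Sum>b\<in>L. monom (f b) (idx b)) (idx a) = (\<Sum>b\<in>L. if b = a then f b else 0)"
    unfolding coeff_sum coeff_monom using assms(2,3)
    by (intro sum.cong) (auto dest: inj_onD)
  also have "\<dots> = f a" using assms(1,3) by simp
  finally show ?thesis using assms(4) by auto
qed

lemma word_weight_count:
  assumes "set u \<subseteq> L" "finite L"
  shows "word_weight w u = (\<Sum>a\<in>L. w a * count_list u a)"
  using assms
proof (induction u)
  case (Cons c u)
  have "w a * count_list (c # u) a = w a * count_list u a + (if a = c then w a else 0)" for a
    by auto
  then have "(\<Sum>a\<in>L. w a * count_list (c # u) a)
      = (\<Sum>a\<in>L. w a * count_list u a) + (\<Sum>a\<in>L. if a = c then w a else 0)"
    by (simp only: sum.distrib)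
  also have "(\<Sum>a\<in>L. if a = c then w a else 0) = w c" using Cons.prems by simp
  finally show ?case using Cons by (simp add: word_weight_def)
qed (simp add: word_weight_def)

lemma mono_degree_weight_vector:
  fixes h :: "'n::finite \<Rightarrow> 'a list"
  assumes "finite L" "\<And>i. set (h i) \<subseteq> L"
  shows "mono_degree (weight_vector w h) m = (\<Sum>a\<in>L. w a * mono_parikh h m a)"
proof -
  have "mono_degree (weight_vector w h) m
      = (\<Sum>i\<in>UNIV. Poly_Mapping.lookup m i * (\<Sum>a\<in>L. w a * count_list (h i) a))"
    unfolding mono_degree_def by (intro sum.cong refl) (simp add: word_weight_count assms)
  also have "\<dots> = (\<Sum>a\<in>L. w a * mono_parikh h m a)"
    by (simp add: mono_parikh_def sum_distrib_left sum.swap[of _ L] mult_ac)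
  finally show ?thesis .
qed

text \<open>For finitely many monomials there is a letter weight w such that equal beta_w-degree
  implies equal Parikh images: take w a = s^(idx a) for s avoiding the roots of the
  polynomials encoding the nonzero Parikh differences.\<close>
lemma separating_weight_exists:
  fixes h :: "'n::finite \<Rightarrow> 'a list" and K :: "('n \<Rightarrow>\<^sub>0 nat) set"
  assumes "finite K"
  obtains w where "\<And>m m'. m \<in> K \<Longrightarrow> m' \<in> K \<Longrightarrow>
    mono_degree (weight_vector w h) m = mono_degree (weight_vector w h) m' \<Longrightarrow>
    mono_parikh h m = mono_parikh h m'"
proof -
  define L where "L = (\<Union>i. set (h i))"
  have L: "finite L" "\<And>i. set (h i) \<subseteq> L" by (auto simp: L_def)
  obtain idx :: "'a \<Rightarrow> nat" where idx: "inj_on idx L"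
    using finite_imp_inj_to_nat_seg[OF L(1)] by blast
  have outside_L: "a \<notin> L \<Longrightarrow> mono_parikh h m a = 0" for m a
    by (simp add: mono_parikh_def L_def count_list_0_iff)
  define diff where "diff = (\<lambda>(m, m') a. int (mono_parikh h m a) - int (mono_parikh h m' a))"
  define Q where "Q p = (\<Sum>a\<in>L. monom (diff p a) (idx a) :: int poly)" for p
  define D where "D = {(m, m'). m \<in> K \<and> m' \<in> K \<and> mono_parikh h m \<noteq> mono_parikh h m'}"
  have "finite D" using assms finite_subset[of D "K \<times> K"] by (auto simp: D_def)
  moreover have "Q p \<noteq> 0" if "p \<in> D" for p
  proof -
    obtain m m' where p: "p = (m, m')" and "mono_parikh h m \<noteq> mono_parikh h m'"
      using \<open>p \<in> D\<close> by (auto simp: D_def)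
    then obtain a where a: "mono_parikh h m a \<noteq> mono_parikh h m' a" by auto
    then have "a \<in> L" using outside_L by force
    then show ?thesis unfolding Q_def using L(1) idx a
      by (intro encoding_poly_nonzero) (auto simp: p diff_def)
  qed
  ultimately obtain s :: nat where s: "\<And>p. p \<in> D \<Longrightarrow> poly (Q p) (int s) \<noteq> 0"
    using common_nat_nonroot[of D Q] by blast
  define w where "w a = s ^ idx a" for a
  show thesis
  proof (rule that, rule ccontr)
    fix m m' assume K: "m \<in> K" "m' \<in> K" and ne: "mono_parikh h m \<noteq> mono_parikh h m'"
      and eq: "mono_degree (weight_vector w h) m = mono_degree (weight_vector w h) m'"
    have "poly (Q (m, m')) (int s) = int (\<Sum>a\<in>L. w a * mono_parikh h m a)
        - int (\<Sum>a\<in>L. w a * mono_parikh h m' a)"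
      by (simp add: Q_def diff_def w_def poly_sum poly_monom
          sum_subtractf[symmetric] algebra_simps)
    also have "\<dots> = 0" using eq by (simp add: mono_degree_weight_vector[OF L])
    finally show False using s[of "(m, m')"] K ne by (simp add: D_def)
  qed
qed

lemma expand_mpoly:
  fixes p :: "('n \<Rightarrow>\<^sub>0 nat) \<Rightarrow>\<^sub>0 int"
  shows "p = (\<Sum>m\<in>Poly_Mapping.keys p. Poly_Mapping.single m (Poly_Mapping.lookup p m))"
  by (rule poly_mapping_eqI) (simp add: lookup_sum lookup_single when_def in_keys_iff)

lemma dvd_if_class_sums_vanish:
  fixes p B :: "('n \<Rightarrow>\<^sub>0 nat) \<Rightarrow>\<^sub>0 int" and deg :: "('n \<Rightarrow>\<^sub>0 nat) \<Rightarrow> 'e"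
  assumes sums: "\<And>e. (\<Sum>m\<in>Poly_Mapping.keys p. if deg m = e then Poly_Mapping.lookup p m else 0) = 0"
    and dvd: "\<And>m m'. m \<in> Poly_Mapping.keys p \<Longrightarrow> m' \<in> Poly_Mapping.keys p \<Longrightarrow> deg m = deg m' \<Longrightarrow>
      B dvd Poly_Mapping.single m 1 - Poly_Mapping.single m' 1"
  shows "B dvd p"
proof -
  let ?K = "Poly_Mapping.keys p" and ?c = "Poly_Mapping.lookup p"
  define r where "r e = (SOME m. m \<in> ?K \<and> deg m = e)" for e
  have r: "r (deg m) \<in> ?K \<and> deg (r (deg m)) = deg m" if "m \<in> ?K" for m
    unfolding r_def by (rule someI[of _ m]) (use that in simp)
  have single_sum: "(\<Sum>m\<in>A. Poly_Mapping.single k (f m)) = Poly_Mapping.single k (sum f A)"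
    for A :: "('n \<Rightarrow>\<^sub>0 nat) set" and k :: "'n \<Rightarrow>\<^sub>0 nat" and f :: "('n \<Rightarrow>\<^sub>0 nat) \<Rightarrow> int"
    by (induction A rule: infinite_finite_induct) (simp_all add: single_add)
  have "(\<Sum>m\<in>?K. Poly_Mapping.single (r (deg m)) (?c m))
      = (\<Sum>e\<in>deg ` ?K. \<Sum>m\<in>{x \<in> ?K. deg x = e}. Poly_Mapping.single (r (deg m)) (?c m))"
    by (rule sum.image_gen) simp
  also have "\<dots> = (\<Sum>e\<in>deg ` ?K. Poly_Mapping.single (r e) (\<Sum>m\<in>{x \<in> ?K. deg x = e}. ?c m))"
    by (intro sum.cong refl) (simp add: single_sum[symmetric])
  also have "\<dots> = 0"
    using sums by (intro sum.neutral) (simp add: sum.inter_filter)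
  finally have class_part: "(\<Sum>m\<in>?K. Poly_Mapping.single (r (deg m)) (?c m)) = 0" .
  have "B dvd Poly_Mapping.single m (?c m) - Poly_Mapping.single (r (deg m)) (?c m)" if "m \<in> ?K" for m
  proof -
    have "B dvd Poly_Mapping.single 0 (?c m) * (Poly_Mapping.single m 1 - Poly_Mapping.single (r (deg m)) 1)"
      using r[OF that] that by (intro dvd_mult dvd) auto
    then show ?thesis by (simp add: mult_single right_diff_distrib)
  qed
  then have "B dvd (\<Sum>m\<in>?K. Poly_Mapping.single m (?c m) - Poly_Mapping.single (r (deg m)) (?c m))
      + (\<Sum>m\<in>?K. Poly_Mapping.single (r (deg m)) (?c m))"
    by (simp add: class_part dvd_sum)
  also have "\<dots> = p"
    by (simp add: sum_subtractf expand_mpoly[symmetric])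
  finally show ?thesis .
qed

lemma binomial_dvd_if_vanishing:
  fixes h :: "'n::finite \<Rightarrow> 'a list" and lam :: "'n \<Rightarrow> int" and p :: "'n mpoly"
  assumes G: "Gamma h = {u. (\<Sum>i\<in>UNIV. of_int (lam i) * u i) = 0}"
    and gcd: "Gcd (range lam) = 1"
    and vanish: "\<And>w. eval_beta (weight_vector w h) p = 0"
  shows "(monomial_X (pos_part lam) - monomial_X (neg_part lam)) dvd p"
proof -
  obtain l where l: "lam l \<noteq> 0" using Gcd_one_nonzero[OF gcd] by blast
  obtain w where w: "\<And>m m'. m \<in> Poly_Mapping.keys p \<Longrightarrow> m' \<in> Poly_Mapping.keys p \<Longrightarrow>
      mono_degree (weight_vector w h) m = mono_degree (weight_vector w h) m' \<Longrightarrow>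
      mono_parikh h m = mono_parikh h m'"
    using separating_weight_exists[of "Poly_Mapping.keys p" h] by auto
  show ?thesis
  proof (rule dvd_if_class_sums_vanish[where deg = "mono_degree (weight_vector w h)"])
    fix e
    show "(\<Sum>m\<in>Poly_Mapping.keys p. if mono_degree (weight_vector w h) m = e
        then Poly_Mapping.lookup p m else 0) = 0"
      using vanish[of w] by (simp flip: coeff_eval_beta)
  next
    fix m m' assume "m \<in> Poly_Mapping.keys p" "m' \<in> Poly_Mapping.keys p"
      "mono_degree (weight_vector w h) m = mono_degree (weight_vector w h) m'"
    then have "mono_parikh h m = mono_parikh h m'" by (rule w)
    then obtain c
      where "\<forall>i. int (Poly_Mapping.lookup m i) - int (Poly_Mapping.lookup m' i) = c * lam i"
      using equal_parikh_multiple[OF G gcd l] by blast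
    then have "(monomial_X (pos_part lam) - monomial_X (neg_part lam))
        dvd monomial_X (Poly_Mapping.lookup m) - monomial_X (Poly_Mapping.lookup m')"
      by (intro binomial_dvd_multiple) auto
    then show "(monomial_X (pos_part lam) - monomial_X (neg_part lam))
        dvd Poly_Mapping.single m 1 - Poly_Mapping.single m' 1"
      by (simp add: monomial_X_single)
  qed
qed

section \<open>Linear dependence over Q(x)\<close>

lemma to_Qx_mult: "to_Qx (a * b) = to_Qx a * to_Qx b"
proof -
  have "map_poly (of_int :: int \<Rightarrow> rat) (a * b) = map_poly of_int a * map_poly of_int b"
    by (rule poly_eqI) (simp add: coeff_map_poly coeff_mult of_int_sum)
  then show ?thesis by (simp add: to_Qx_def)
qed

lemma to_Qx_eq_0_iff: "to_Qx p = 0 \<longleftrightarrow> p = 0"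
proof
  assume "to_Qx p = 0"
  then have "Fract (map_poly (of_int :: int \<Rightarrow> rat) p) 1 = Fract 0 1"
    by (simp add: to_Qx_def fract_collapse)
  then have "map_poly (of_int :: int \<Rightarrow> rat) p = 0" by (simp add: eq_fract)
  then show "p = 0" by (simp add: map_poly_eq_0_iff)
qed (simp add: to_Qx_def fract_collapse)

lemma lin_dep_from_minors:
  fixes v w :: "'n \<Rightarrow> int poly"
  assumes minors: "\<And>j k. v j * w k = w j * v k"
  shows "lin_dep_Qx v w"
proof (cases "\<forall>j. v j = 0")
  case True
  then show ?thesis unfolding lin_dep_Qx_def
    by (intro exI[of _ 1] exI[of _ 0]) (simp add: to_Qx_eq_0_iff)
next
  case False
  then obtain l where l: "v l \<noteq> 0" by auto
  have "to_Qx (w l) * to_Qx (v j) + - to_Qx (v l) * to_Qx (w j) = 0" for j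
    using minors[of j l] by (simp add: mult_ac flip: to_Qx_mult)
  then show ?thesis unfolding lin_dep_Qx_def using l by (metis neg_equal_0_iff_equal to_Qx_eq_0_iff)
qed

theorem lemma3p9:
  fixes h :: "'n::finite \<Rightarrow> 'a list"
    and E E' :: "'n equation"
    and lam :: "'n \<Rightarrow> int"
  assumes "is_solution h E" and "is_solution h E'"
    and "rank h = card (UNIV :: 'n set) - 1"
    and "Gcd (range lam) = 1"
    and "Gamma h = {u. (\<Sum>i\<in>UNIV. of_int (lam i) * u i) = 0}"
  shows "(\<forall>j k. (monomial_X (pos_part lam) - monomial_X (neg_part lam)) dvd t_poly E E' j k)
    \<and> (\<forall>\<beta>. (\<lambda>i. of_nat (\<beta> i)) \<in> Gamma h \<longrightarrow> lin_dep_Qx (S_vec E \<beta>) (S_vec E' \<beta>))"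
proof -
  note sol = assms(1,2) and gcd = assms(4) and G = assms(5)
  obtain l where l: "lam l \<noteq> 0" using Gcd_one_nonzero[OF gcd] by blast
  have t_dvd: "(monomial_X (pos_part lam) - monomial_X (neg_part lam)) dvd t_poly E E' j k" for j k
    using occ_kernel_minors[OF G l solution_in_occ_kernel[OF sol(1)] solution_in_occ_kernel[OF sol(2)]]
    by (intro binomial_dvd_if_vanishing[OF G gcd]) (simp add: eval_beta_t_poly)
  have "lin_dep_Qx (S_vec E \<beta>) (S_vec E' \<beta>)" if "(\<lambda>i. of_nat (\<beta> i)) \<in> Gamma h" for \<beta>
  proof (rule lin_dep_from_minors)
    fix j k
    have "eval_beta \<beta> (monomial_X (pos_part lam) - monomial_X (neg_part lam)) = 0"
      using that G by (intro eval_beta_binomial_orthogonal) simp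
    moreover obtain q where "t_poly E E' j k = (monomial_X (pos_part lam) - monomial_X (neg_part lam)) * q"
      using t_dvd[of j k] by blast
    ultimately have "eval_beta \<beta> (t_poly E E' j k) = 0" by (simp add: eval_beta_mult)
    then show "S_vec E \<beta> j * S_vec E' \<beta> k = S_vec E' \<beta> j * S_vec E \<beta> k"
      by (simp add: eval_beta_t_poly)
  qed
  with t_dvd show ?thesis by blast
qed

end
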